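(* Let $\Gamma$ be the integer Heisenberg group, with elements written $(a,b,c)$, and let $p\ge2$ be a prime. The map $\varphi_p(a,b,c)=(pa,pb,p^2c)$ is an injective homomorphism $\Gamma\to\Gamma$, and the chain $\Gamma_\ell=\varphi_p^\ell(\Gamma)=\{(p^\ell a,p^\ell b,p^{2\ell}c):a,b,c\in\mathbb{Z}\}$ satisfies: the normal core of $\Gamma_\ell$ is $C_\ell=\{(p^{2\ell}a,p^{2\ell}b,p^{2\ell}c)\}$; the profinite completion $\widehat{\Gamma}_\infty=\varprojlim\Gamma/C_\ell$ has Steinitz order $p^\infty$; and although each quotient $\Gamma_\ell/C_\ell$ is nontrivial for $\ell>0$, the discriminant $D_\infty=\varprojlim\Gamma_\ell/C_\ell$ is the trivial group.
   Context: The integer Heisenberg group consists of the matrices $\begin{pmatrix}1&a&c\\0&1&b\\0&0&1\end{pmatrix}$, $a,b,c\in\mathbb{Z}$, denoted $(a,b,c)$; the product is $(a,b,c)(a',b',c')=(a+a',b+b',c+c'+ab')$. The normal core of a subgroup $H$ is $\bigcap_{g\in\Gamma}gHg^{-1}$. For a descending chain $\Gamma_\ell$ of finite-index subgroups with cores $C_\ell$, the discriminant is $D_\infty=\varprojlim\{\Gamma_{\ell+1}/C_{\ell+1}\to\Gamma_\ell/C_\ell\}\subset\widehat{\Gamma}_\infty$, with the maps induced by inclusion. The Steinitz order of a profinite group $\mathfrak{G}$ is $\mathrm{lcm}\{\#\mathfrak{G}/\mathfrak{N}:\mathfrak{N}\text{ open normal}\}$ as a supernatural number. *)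

theory Defs
  imports "HOL-Algebra.Algebra" "HOL-Computational_Algebra.Primes" "HOL-Library.Extended_Nat"
begin

definition heis_mult :: "int \<times> int \<times> int \<Rightarrow> int \<times> int \<times> int \<Rightarrow> int \<times> int \<times> int" where
  "heis_mult x y = (case x of (a,b,c) \<Rightarrow> case y of (u,v,w) \<Rightarrow> (a+u, b+v, c+w+a*v))"

definition heis :: "(int \<times> int \<times> int) monoid" where
  "heis = \<lparr>carrier = UNIV, monoid.mult = heis_mult, one = (0,0,0)\<rparr>"

definition heis_phi :: "nat \<Rightarrow> int \<times> int \<times> int \<Rightarrow> int \<times> int \<times> int" where
  "heis_phi p x = (case x of (a,b,c) \<Rightarrow> (int p * a, int p * b, int p ^ 2 * c))"

definition heis_chain :: "nat \<Rightarrow> nat \<Rightarrow> (int \<times> int \<times> int) set" where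
  "heis_chain p l = (heis_phi p ^^ l) ` carrier heis"

definition normal_core :: "('a, 'b) monoid_scheme \<Rightarrow> 'a set \<Rightarrow> 'a set" where
  "normal_core G H = (\<Inter>g\<in>carrier G. (g <#\<^bsub>G\<^esub> H) #>\<^bsub>G\<^esub> inv\<^bsub>G\<^esub> g)"

text \<open>Inverse limit of the quotients G / N l along the maps G/N(l+1) -> G/N l,
  g N(l+1) |-> g N l (for a descending chain of normal subgroups N l), realised as
  compatible sequences of cosets with pointwise (coset) multiplication.\<close>
definition invlim :: "('a, 'b) monoid_scheme \<Rightarrow> (nat \<Rightarrow> 'a set) \<Rightarrow> (nat \<Rightarrow> 'a set) monoid" where
  "invlim G N = \<lparr>carrier = {f. \<forall>l. f l \<in> rcosets\<^bsub>G\<^esub> (N l) \<and>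
                                 (\<forall>g\<in>f (Suc l). f l = N l #>\<^bsub>G\<^esub> g)},
                 monoid.mult = (\<lambda>f h l. f l <#>\<^bsub>G\<^esub> h l),
                 one = (\<lambda>l. N l)\<rparr>"

definition invlim_proj_kernel :: "('a, 'b) monoid_scheme \<Rightarrow> (nat \<Rightarrow> 'a set) \<Rightarrow> nat \<Rightarrow> (nat \<Rightarrow> 'a set) set" where
  "invlim_proj_kernel G N l = {f \<in> carrier (invlim G N). f l = N l}"

text \<open>Open normal subgroups of the inverse limit (inverse-limit topology: a subgroup is open
  iff it contains the kernel of some projection).\<close>
definition open_normal_subgroups :: "('a, 'b) monoid_scheme \<Rightarrow> (nat \<Rightarrow> 'a set) \<Rightarrow> (nat \<Rightarrow> 'a set) set set" where
  "open_normal_subgroups G N = {M. M \<lhd> invlim G N \<and> (\<exists>l. invlim_proj_kernel G N l \<subseteq> M)}"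

text \<open>Steinitz order as a supernatural number, given by its exponent at each prime q:
  lcm of the indices #(Ghat/M) over open normal subgroups M.\<close>
definition steinitz_exponent :: "('a, 'b) monoid_scheme \<Rightarrow> (nat \<Rightarrow> 'a set) \<Rightarrow> nat \<Rightarrow> enat" where
  "steinitz_exponent G N q =
     (SUP M\<in>open_normal_subgroups G N. enat (multiplicity q (card (rcosets\<^bsub>invlim G N\<^esub> M))))"

text \<open>The discriminant: inverse limit of Gamma_l / C_l along inclusion-induced maps,
  seen inside the inverse limit of Gamma / C_l.\<close>
definition discriminant :: "('a, 'b) monoid_scheme \<Rightarrow> (nat \<Rightarrow> 'a set) \<Rightarrow> (nat \<Rightarrow> 'a set) \<Rightarrow> (nat \<Rightarrow> 'a set) set" where
  "discriminant G H N = {f \<in> carrier (invlim G N). \<forall>l. \<exists>g\<in>H l. f l = N l #>\<^bsub>G\<^esub> g}"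

end

theory Submission
  imports Defs
begin

text \<open>Both \<open>\<Gamma>\<^sub>\<ell>\<close> and its core are lattices \<open>{(a, b, c). m dvd a, m dvd b, n dvd c}\<close>,
  with \<open>(m, n) = (p\<^sup>\<ell>, p\<^sup>2\<^sup>\<ell>)\<close> and \<open>(p\<^sup>2\<^sup>\<ell>, p\<^sup>2\<^sup>\<ell>)\<close> respectively: conjugating
  \<open>(a, b, c)\<close> by \<open>(x, y, z)\<close> gives \<open>(a, b, c - x b + a y)\<close>, so the core must have \<open>n dvd a, b\<close>
  too. Hence \<open>\<Gamma>/C\<^sub>\<ell>\<close> has order \<open>p\<^sup>6\<^sup>\<ell>\<close>; every open normal subgroup of the completion
  contains the kernel of some projection, so its index divides some \<open>p\<^sup>6\<^sup>\<ell>\<close>, and the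
  Steinitz order is \<open>p\<^sup>\<infinity>\<close>. Finally \<open>\<Gamma>\<^sub>2\<^sub>\<ell> \<subseteq> C\<^sub>\<ell>\<close>: a compatible sequence of cosets
  \<open>C\<^sub>m \<gamma>\<^sub>m\<close> with \<open>\<gamma>\<^sub>m \<in> \<Gamma>\<^sub>m\<close> has trivial \<open>\<ell>\<close>-th term, so the discriminant is trivial.\<close>

lemma (in group) mem_normal_core_iff:
  assumes "H \<subseteq> carrier G" and "t \<in> carrier G"
  shows "t \<in> normal_core G H \<longleftrightarrow> (\<forall>g\<in>carrier G. inv g \<otimes> t \<otimes> g \<in> H)"
proof -
  have "t \<in> (g <# H) #> inv g \<longleftrightarrow> inv g \<otimes> t \<otimes> g \<in> H" if g: "g \<in> carrier G" for g
  proof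
    assume "t \<in> (g <# H) #> inv g"
    then obtain h where h: "h \<in> H" and t: "t = g \<otimes> h \<otimes> inv g"
      by (auto simp: l_coset_def r_coset_def)
    have "inv g \<otimes> t \<otimes> g = h"
      using g h assms(1) by (auto simp: t m_assoc simp flip: m_assoc[of "inv g" g])
    with h show "inv g \<otimes> t \<otimes> g \<in> H" by simp
  next
    assume h: "inv g \<otimes> t \<otimes> g \<in> H"
    have "t = g \<otimes> (inv g \<otimes> t \<otimes> g) \<otimes> inv g"
      using g assms(2) by (simp add: m_assoc flip: m_assoc[of g "inv g"])
    with h show "t \<in> (g <# H) #> inv g"
      by (auto simp: l_coset_def r_coset_def)
  qed
  then show ?thesis by (auto simp: normal_core_def)
qed

lemma (in group_hom) order_dvd_of_surj:
  assumes "h ` carrier G = carrier H"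
  shows "order H dvd order G"
proof -
  let ?K = "kernel G H h"
  have "order (G Mod ?K) = order H"
    by (rule iso_same_order[OF FactGroup_iso_set[OF assms]])
  moreover have "card (rcosets\<^bsub>G\<^esub> ?K) * card ?K = order G"
    by (rule G.lagrange[OF subgroup_kernel])
  ultimately show ?thesis
    by (metis dvd_triv_left order_def partial_object.simps(1) FactGroup_def)
qed

text \<open>No finiteness is needed: an infinite index is \<open>card _ = 0\<close>, divisible by everything.\<close>

lemma (in group) card_rcosets_dvd_of_normal_subset:
  assumes K: "K \<lhd> G" and M: "M \<lhd> G" and KM: "K \<subseteq> M"
  shows "card (rcosets M) dvd card (rcosets K)"
proof -
  have Msg: "subgroup M G" and Ksg: "subgroup K G"
    using K M normal_imp_subgroup by blast+
  have compat: "M #> x = M #> y" if xy: "x \<in> carrier G" "y \<in> carrier G" "K #> x = K #> y" for x y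
  proof -
    have "y \<in> K #> x" using rcos_self[OF xy(2) Ksg] xy(3) by simp
    then have "y \<in> M #> x" using KM by (auto simp: r_coset_def)
    then show ?thesis using repr_independence[OF _ xy(1) Msg] by blast
  qed
  obtain q where q: "q \<in> hom (G Mod K) (G Mod M)"
    and q_coset: "\<And>x. x \<in> carrier G \<Longrightarrow> q (K #> x) = M #> x"
    using FactGroup_universal[OF normal.r_coset_hom_Mod[OF M] K compat] by blast
  have "group_hom (G Mod K) (G Mod M) q"
    using q normal.factorgroup_is_group[OF K] normal.factorgroup_is_group[OF M]
    by (simp add: group_hom_def group_hom_axioms_def)
  moreover have "q ` carrier (G Mod K) = carrier (G Mod M)"
    using q_coset by (auto simp: carrier_FactGroup image_comp)
  ultimately have "order (G Mod M) dvd order (G Mod K)"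
    by (rule group_hom.order_dvd_of_surj)
  then show ?thesis by (simp add: order_def FactGroup_def)
qed

section \<open>Inverse limits of quotients\<close>

locale inverse_system =
  fixes G :: "('a, 'b) monoid_scheme" and N :: "nat \<Rightarrow> 'a set"
  assumes group: "group G" and normal: "\<And>l. N l \<lhd> G" and decreasing: "\<And>l. N (Suc l) \<subseteq> N l"
begin

lemma subgroup: "subgroup (N l) G"
  using normal normal_imp_subgroup by blast

lemma invlim_simps [simp]:
  "monoid.mult (invlim G N) = (\<lambda>f h l. f l <#>\<^bsub>G\<^esub> h l)"
  "one (invlim G N) = N"
  by (simp_all add: invlim_def)

lemma carrier_invlim_iff:
  "f \<in> carrier (invlim G N) \<longleftrightarrow> (\<forall>l. f l \<in> rcosets\<^bsub>G\<^esub> (N l) \<and> f (Suc l) \<subseteq> f l)"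
proof -
  have "(\<forall>g\<in>f (Suc l). f l = N l #>\<^bsub>G\<^esub> g) \<longleftrightarrow> f (Suc l) \<subseteq> f l"
    if r: "f l \<in> rcosets\<^bsub>G\<^esub> (N l)" "f (Suc l) \<in> rcosets\<^bsub>G\<^esub> (N (Suc l))" for l
  proof
    have sub: "f (Suc l) \<subseteq> carrier G" using subgroup.rcosets_carrier[OF subgroup group r(2)] .
    assume "\<forall>g\<in>f (Suc l). f l = N l #>\<^bsub>G\<^esub> g"
    then show "f (Suc l) \<subseteq> f l"
      using sub group.rcos_self[OF group _ subgroup] by blast
  next
    assume s: "f (Suc l) \<subseteq> f l"
    obtain a where a: "a \<in> carrier G" "f l = N l #>\<^bsub>G\<^esub> a"
      using r(1) unfolding RCOSETS_def by blast
    show "\<forall>g\<in>f (Suc l). f l = N l #>\<^bsub>G\<^esub> g"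
      using s a group.repr_independence[OF group _ a(1) subgroup] by blast
  qed
  then show ?thesis unfolding invlim_def by auto
qed

lemma invlim_antimono:
  assumes "f \<in> carrier (invlim G N)" and "l \<le> m"
  shows "f m \<subseteq> f l"
  using assms lift_Suc_antimono_le[of f] by (auto simp: carrier_invlim_iff)

lemma group_invlim: "group (invlim G N)"
proof (rule groupI)
  fix x y assume "x \<in> carrier (invlim G N)" "y \<in> carrier (invlim G N)"
  then show "x \<otimes>\<^bsub>invlim G N\<^esub> y \<in> carrier (invlim G N)"
    unfolding carrier_invlim_iff
    by (simp add: normal.setmult_closed[OF normal] mono_set_mult)
next
  show "\<one>\<^bsub>invlim G N\<^esub> \<in> carrier (invlim G N)"
    unfolding carrier_invlim_iff using subgroup.subgroup_in_rcosets[OF subgroup group] decreasing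
    by simp
next
  fix x y z
  assume "x \<in> carrier (invlim G N)" "y \<in> carrier (invlim G N)" "z \<in> carrier (invlim G N)"
  then show "x \<otimes>\<^bsub>invlim G N\<^esub> y \<otimes>\<^bsub>invlim G N\<^esub> z = x \<otimes>\<^bsub>invlim G N\<^esub> (y \<otimes>\<^bsub>invlim G N\<^esub> z)"
    unfolding carrier_invlim_iff by (simp add: fun_eq_iff) (metis normal.rcosets_assoc[OF normal])
next
  fix x assume "x \<in> carrier (invlim G N)"
  then show "\<one>\<^bsub>invlim G N\<^esub> \<otimes>\<^bsub>invlim G N\<^esub> x = x"
    unfolding carrier_invlim_iff by (simp add: fun_eq_iff normal.rcosets_mult_eq[OF normal])
next
  fix x assume x: "x \<in> carrier (invlim G N)"
  show "\<exists>y\<in>carrier (invlim G N). y \<otimes>\<^bsub>invlim G N\<^esub> x = \<one>\<^bsub>invlim G N\<^esub>"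
  proof
    show "(\<lambda>l. set_inv\<^bsub>G\<^esub> (x l)) \<otimes>\<^bsub>invlim G N\<^esub> x = \<one>\<^bsub>invlim G N\<^esub>"
      using x unfolding carrier_invlim_iff
      by (simp add: fun_eq_iff normal.rcosets_inv_mult_group_eq[OF normal])
    show "(\<lambda>l. set_inv\<^bsub>G\<^esub> (x l)) \<in> carrier (invlim G N)"
      using x unfolding carrier_invlim_iff
      by (simp add: normal.setinv_closed[OF normal]) (force simp: SET_INV_def)
  qed
qed

lemma group_hom_invlim_proj: "group_hom (invlim G N) (G Mod N l) (\<lambda>f. f l)"
proof -
  have "(\<lambda>f. f l) \<in> hom (invlim G N) (G Mod N l)"
    by (rule homI) (auto simp: carrier_invlim_iff FactGroup_def)
  then show ?thesis
    using group_invlim normal.factorgroup_is_group[OF normal]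
    by (simp add: group_hom_def group_hom_axioms_def)
qed

lemma invlim_proj_surj: "(\<lambda>f. f l) ` carrier (invlim G N) = carrier (G Mod N l)"
proof
  show "(\<lambda>f. f l) ` carrier (invlim G N) \<subseteq> carrier (G Mod N l)"
    by (auto simp: carrier_invlim_iff FactGroup_def)
next
  show "carrier (G Mod N l) \<subseteq> (\<lambda>f. f l) ` carrier (invlim G N)"
  proof
    fix C assume "C \<in> carrier (G Mod N l)"
    then obtain g where g: "g \<in> carrier G" "C = N l #>\<^bsub>G\<^esub> g"
      by (auto simp: FactGroup_def RCOSETS_def)
    have "(\<lambda>m. N m #>\<^bsub>G\<^esub> g) \<in> carrier (invlim G N)"
      unfolding carrier_invlim_iff using g decreasing by (auto simp: RCOSETS_def r_coset_def)
    with g show "C \<in> (\<lambda>f. f l) ` carrier (invlim G N)" by force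
  qed
qed

lemma kernel_invlim_proj: "kernel (invlim G N) (G Mod N l) (\<lambda>f. f l) = invlim_proj_kernel G N l"
  by (simp add: kernel_def invlim_proj_kernel_def)

lemma invlim_proj_kernel_normal: "invlim_proj_kernel G N l \<lhd> invlim G N"
  using group_hom.normal_kernel[OF group_hom_invlim_proj] kernel_invlim_proj by metis

lemma card_rcosets_invlim_proj_kernel:
  "card (rcosets\<^bsub>invlim G N\<^esub> (invlim_proj_kernel G N l)) = card (rcosets\<^bsub>G\<^esub> (N l))"
proof -
  have "invlim G N Mod invlim_proj_kernel G N l \<cong> G Mod N l"
    using group_hom.FactGroup_iso[OF group_hom_invlim_proj invlim_proj_surj]
    by (simp add: kernel_invlim_proj)
  then show ?thesis
    using iso_same_card unfolding FactGroup_def by fastforce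
qed

lemma invlim_proj_kernel_open: "invlim_proj_kernel G N l \<in> open_normal_subgroups G N"
  unfolding open_normal_subgroups_def using invlim_proj_kernel_normal by blast

lemma card_rcosets_open_normal_dvd:
  assumes "M \<in> open_normal_subgroups G N"
  obtains l where "card (rcosets\<^bsub>invlim G N\<^esub> M) dvd card (rcosets\<^bsub>G\<^esub> (N l))"
proof -
  obtain l where M: "M \<lhd> invlim G N" and K: "invlim_proj_kernel G N l \<subseteq> M"
    using assms unfolding open_normal_subgroups_def by blast
  have "card (rcosets\<^bsub>invlim G N\<^esub> M) dvd card (rcosets\<^bsub>invlim G N\<^esub> (invlim_proj_kernel G N l))"
    by (rule group.card_rcosets_dvd_of_normal_subset[OF group_invlim invlim_proj_kernel_normal M K])
  then show thesis
    using that card_rcosets_invlim_proj_kernel by simp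
qed

lemma steinitz_exponent_prime_power_indices:
  assumes p: "Factorial_Ring.prime p" and q: "Factorial_Ring.prime q"
    and index: "\<And>l. card (rcosets\<^bsub>G\<^esub> (N l)) = p ^ e l"
    and unbounded: "\<And>k. \<exists>l. k \<le> e l"
  shows "steinitz_exponent G N q = (if q = p then \<infinity> else 0)"
proof (cases "q = p")
  case True
  have "enat k \<le> steinitz_exponent G N q" for k
  proof -
    obtain l where "k \<le> e l" using unbounded by blast
    moreover have "multiplicity q (card (rcosets\<^bsub>invlim G N\<^esub> (invlim_proj_kernel G N l))) = e l"
      using True p by (simp add: card_rcosets_invlim_proj_kernel index multiplicity_prime_power)
    ultimately show ?thesis
      unfolding steinitz_exponent_def
      by (metis (no_types, lifting) SUP_upper2 enat_ord_simps(1) invlim_proj_kernel_open)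
  qed
  then show ?thesis
    using True by (metis Suc_ile_eq enat.exhaust linorder_not_less)
next
  case False
  have "multiplicity q (card (rcosets\<^bsub>invlim G N\<^esub> M)) = 0"
    if M: "M \<in> open_normal_subgroups G N" for M
  proof (rule not_dvd_imp_multiplicity_0)
    obtain l where "card (rcosets\<^bsub>invlim G N\<^esub> M) dvd p ^ e l"
      using card_rcosets_open_normal_dvd[OF M] index by metis
    then show "\<not> q dvd card (rcosets\<^bsub>invlim G N\<^esub> M)"
      using False p q by (metis dvd_trans prime_dvd_power primes_dvd_imp_eq)
  qed
  then show ?thesis
    using False invlim_proj_kernel_open
    by (auto simp: steinitz_exponent_def zero_enat_def[symmetric] SUP_constant)
qed

lemma discriminant_eq_one:
  assumes one: "\<And>l. \<one>\<^bsub>G\<^esub> \<in> H l" and H_sub: "\<And>l. \<exists>m\<ge>l. H m \<subseteq> N l"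
  shows "discriminant G H N = {\<one>\<^bsub>invlim G N\<^esub>}"
proof
  show "discriminant G H N \<subseteq> {\<one>\<^bsub>invlim G N\<^esub>}"
  proof
    fix f assume "f \<in> discriminant G H N"
    then have f: "f \<in> carrier (invlim G N)" and f_coset: "\<forall>l. \<exists>g\<in>H l. f l = N l #>\<^bsub>G\<^esub> g"
      unfolding discriminant_def by blast+
    have "f l = N l" for l
    proof -
      obtain m where "l \<le> m" and Hm: "H m \<subseteq> N l" using H_sub by blast
      obtain g where "g \<in> H m" and fm: "f m = N m #>\<^bsub>G\<^esub> g" using f_coset by blast
      then have gN: "g \<in> N l" using Hm by blast
      then have "g \<in> f m"
        unfolding fm using group.rcos_self[OF group _ subgroup] subgroup.mem_carrier[OF subgroup] by blast
      then have "g \<in> f l" using invlim_antimono[OF f \<open>l \<le> m\<close>] by blast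
      moreover obtain a where "a \<in> carrier G" "f l = N l #>\<^bsub>G\<^esub> a"
        using f unfolding carrier_invlim_iff RCOSETS_def by blast
      ultimately have "f l = N l #>\<^bsub>G\<^esub> g"
        using group.repr_independence[OF group _ _ subgroup] by blast
      then show ?thesis using subgroup.rcos_const[OF subgroup group gN] by simp
    qed
    then show "f \<in> {\<one>\<^bsub>invlim G N\<^esub>}" by auto
  qed
next
  have "\<one>\<^bsub>invlim G N\<^esub> \<in> carrier (invlim G N)"
    by (rule monoid.one_closed[OF group.is_monoid[OF group_invlim]])
  moreover have "N l #>\<^bsub>G\<^esub> \<one>\<^bsub>G\<^esub> = N l" for l
    using group.coset_mult_one[OF group] subgroup.subset[OF subgroup] by blast
  ultimately show "{\<one>\<^bsub>invlim G N\<^esub>} \<subseteq> discriminant G H N"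
    using one by (auto simp: discriminant_def)
qed

end

section \<open>The Heisenberg group and its lattices\<close>

lemma heis_mult_simp [simp]: "heis_mult (a, b, c) (u, v, w) = (a + u, b + v, c + w + a * v)"
  by (simp add: heis_mult_def)

lemma heis_simps [simp]: "carrier heis = UNIV" "monoid.mult heis = heis_mult" "one heis = (0, 0, 0)"
  by (simp_all add: heis_def)

lemma group_heis: "group heis"
proof (rule groupI)
  fix x y z :: "int \<times> int \<times> int"
  show "x \<otimes>\<^bsub>heis\<^esub> y \<otimes>\<^bsub>heis\<^esub> z = x \<otimes>\<^bsub>heis\<^esub> (y \<otimes>\<^bsub>heis\<^esub> z)"
    by (cases x; cases y; cases z) (simp add: algebra_simps)
next
  fix x :: "int \<times> int \<times> int"
  obtain a b c where "x = (a, b, c)" by (cases x)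
  then show "\<exists>y\<in>carrier heis. y \<otimes>\<^bsub>heis\<^esub> x = \<one>\<^bsub>heis\<^esub>"
    by (intro bexI[of _ "(- a, - b, - c + a * b)"]) auto
qed auto

lemma heis_inv [simp]: "inv\<^bsub>heis\<^esub> (a, b, c) = (- a, - b, - c + a * b)"
  by (rule group.inv_equality[OF group_heis]) (auto simp: algebra_simps)

lemma heis_phi_hom: "heis_phi p \<in> hom heis heis"
  by (rule homI) (auto simp: heis_phi_def power2_eq_square algebra_simps split: prod.splits)

lemma inj_heis_phi: "p > 0 \<Longrightarrow> inj (heis_phi p)"
  by (auto simp: inj_def heis_phi_def split: prod.splits)

lemma heis_phi_funpow:
  "(heis_phi p ^^ l) (a, b, c) = (int p ^ l * a, int p ^ l * b, int p ^ (2 * l) * c)"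
  by (induction l) (auto simp: heis_phi_def power2_eq_square algebra_simps mult_2 power_add)

lemma heis_chain_eq:
  "heis_chain p l = {(int p ^ l * a, int p ^ l * b, int p ^ (2 * l) * c) | a b c. True}"
  by (auto simp: heis_chain_def heis_phi_funpow image_iff)

definition heis_lattice :: "int \<Rightarrow> int \<Rightarrow> (int \<times> int \<times> int) set" where
  "heis_lattice m n = {(a, b, c). m dvd a \<and> m dvd b \<and> n dvd c}"

lemma heis_lattice_eq: "heis_lattice m n = {(m * a, m * b, n * c) | a b c. True}"
  by (auto simp: heis_lattice_def elim!: dvdE)

lemma heis_chain_eq_lattice: "heis_chain p l = heis_lattice (int p ^ l) (int p ^ (2 * l))"
  by (simp add: heis_chain_eq heis_lattice_eq)

lemma heis_lattice_mono: "m' dvd m \<Longrightarrow> n' dvd n \<Longrightarrow> heis_lattice m n \<subseteq> heis_lattice m' n'"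
  by (auto simp: heis_lattice_def intro: dvd_trans)

lemma heis_lattice_psubset:
  assumes "m dvd n" and "\<not> n dvd m"
  shows "heis_lattice n n \<subset> heis_lattice m n"
proof
  show "heis_lattice n n \<subseteq> heis_lattice m n" using assms(1) by (rule heis_lattice_mono) simp
  have "(m, 0, 0) \<in> heis_lattice m n" "(m, 0, 0) \<notin> heis_lattice n n"
    using assms(2) by (simp_all add: heis_lattice_def)
  then show "heis_lattice n n \<noteq> heis_lattice m n" by blast
qed

lemma normal_core_heis_lattice:
  assumes "m dvd n"
  shows "normal_core heis (heis_lattice m n) = heis_lattice n n"
proof (rule Set.set_eqI)
  fix t :: "int \<times> int \<times> int"
  obtain a b c where t: "t = (a, b, c)" by (cases t)
  have "t \<in> normal_core heis (heis_lattice m n)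
          \<longleftrightarrow> (\<forall>x y. m dvd a \<and> m dvd b \<and> n dvd c - x * b + a * y)"
    by (simp add: group.mem_normal_core_iff[OF group_heis] t heis_lattice_def algebra_simps)
  also have "\<dots> \<longleftrightarrow> n dvd a \<and> n dvd b \<and> n dvd c"
  proof
    assume h: "\<forall>x y. m dvd a \<and> m dvd b \<and> n dvd c - x * b + a * y"
    then have "n dvd c" "n dvd c + b" "n dvd c + a"
      using spec2[OF h, of 0 0] spec2[OF h, of "-1" 0] spec2[OF h, of 0 1] by simp_all
    then show "n dvd a \<and> n dvd b \<and> n dvd c"
      by (metis add_diff_cancel_left' dvd_diff)
  qed (use assms dvd_trans in auto)
  finally show "t \<in> normal_core heis (heis_lattice m n) \<longleftrightarrow> t \<in> heis_lattice n n"
    by (simp add: t heis_lattice_def)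
qed

lemma heis_lattice_normal: "heis_lattice n n \<lhd> heis"
proof -
  have "subgroup (heis_lattice n n) heis"
  proof (rule group.subgroupI[OF group_heis])
    show "heis_lattice n n \<noteq> {}" by (auto simp: heis_lattice_def)
  qed (auto simp: heis_lattice_def)
  moreover have "g \<otimes>\<^bsub>heis\<^esub> h \<otimes>\<^bsub>heis\<^esub> inv\<^bsub>heis\<^esub> g \<in> heis_lattice n n"
    if "h \<in> heis_lattice n n" for g h
    using that by (cases g; cases h) (auto simp: heis_lattice_def algebra_simps)
  ultimately show ?thesis
    by (simp add: group.normal_inv_iff[OF group_heis])
qed

lemma heis_lattice_rcoset:
  "heis_lattice n n #>\<^bsub>heis\<^esub> (a, b, c) = {(u, v, w). u mod n = a mod n \<and> v mod n = b mod n \<and> w mod n = c mod n}"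
proof (rule Set.set_eqI)
  fix t :: "int \<times> int \<times> int"
  obtain u v w where t: "t = (u, v, w)" by (cases t)
  have "t \<in> heis_lattice n n #>\<^bsub>heis\<^esub> (a, b, c) \<longleftrightarrow>
          (\<exists>x y z. n dvd x \<and> n dvd y \<and> n dvd z \<and> t = (x + a, y + b, z + c + x * b))"
    by (auto simp: r_coset_def heis_lattice_def)
  also have "\<dots> \<longleftrightarrow> n dvd u - a \<and> n dvd v - b \<and> n dvd w - c"
  proof
    assume "n dvd u - a \<and> n dvd v - b \<and> n dvd w - c"
    moreover have "t = (u - a + a, v - b + b, (w - c - (u - a) * b) + c + (u - a) * b)"
      using t by simp
    ultimately show "\<exists>x y z. n dvd x \<and> n dvd y \<and> n dvd z \<and> t = (x + a, y + b, z + c + x * b)"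
      by (metis dvd_diff dvd_mult2)
  qed (auto simp: t)
  finally show "t \<in> heis_lattice n n #>\<^bsub>heis\<^esub> (a, b, c) \<longleftrightarrow>
      t \<in> {(u, v, w). u mod n = a mod n \<and> v mod n = b mod n \<and> w mod n = c mod n}"
    by (simp add: t mod_eq_dvd_iff)
qed

lemma card_rcosets_heis_lattice:
  assumes "n > 0"
  shows "card (rcosets\<^bsub>heis\<^esub> (heis_lattice n n)) = nat n ^ 3"
proof -
  define r :: "int \<times> int \<times> int \<Rightarrow> int \<times> int \<times> int"
    where "r = map_prod (\<lambda>a. a mod n) (map_prod (\<lambda>b. b mod n) (\<lambda>c. c mod n))"
  have coset: "heis_lattice n n #>\<^bsub>heis\<^esub> g = r -` {r g}" for g
    by (cases g) (auto simp: heis_lattice_rcoset r_def)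
  have range_r: "range r = {0..<n} \<times> {0..<n} \<times> {0..<n}"
  proof
    show "range r \<subseteq> {0..<n} \<times> {0..<n} \<times> {0..<n}"
      using assms by (auto simp: r_def)
    show "{0..<n} \<times> {0..<n} \<times> {0..<n} \<subseteq> range r"
    proof
      fix s assume "s \<in> {0..<n} \<times> {0..<n} \<times> {0..<n}"
      then have "r s = s" by (auto simp: r_def)
      then show "s \<in> range r" by (metis rangeI)
    qed
  qed
  have "rcosets\<^bsub>heis\<^esub> (heis_lattice n n) = (\<lambda>v. r -` {v}) ` range r"
    by (auto simp: RCOSETS_def coset)
  moreover have "inj_on (\<lambda>v. r -` {v}) (range r)"
    by (rule inj_onI) blast
  ultimately have "card (rcosets\<^bsub>heis\<^esub> (heis_lattice n n)) = card (range r)"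
    by (simp add: card_image)
  then show ?thesis
    by (simp add: range_r card_cartesian_product power3_eq_cube)
qed

theorem mainTheorem8:
  fixes p :: nat
  assumes "Factorial_Ring.prime p"
  shows "group heis
    \<and> heis_phi p \<in> hom heis heis \<and> inj (heis_phi p)
    \<and> (\<forall>l. heis_chain p l = {(int p ^ l * a, int p ^ l * b, int p ^ (2*l) * c) | a b c. True})
    \<and> (\<forall>l. normal_core heis (heis_chain p l)
            = {(int p ^ (2*l) * a, int p ^ (2*l) * b, int p ^ (2*l) * c) | a b c. True})
    \<and> (\<forall>q. Factorial_Ring.prime q \<longrightarrow>
          steinitz_exponent heis (\<lambda>l. normal_core heis (heis_chain p l)) q
            = (if q = p then \<infinity> else 0))
    \<and> (\<forall>l>0. normal_core heis (heis_chain p l) \<subset> heis_chain p l)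
    \<and> discriminant heis (heis_chain p) (\<lambda>l. normal_core heis (heis_chain p l))
        = {\<one>\<^bsub>invlim heis (\<lambda>l. normal_core heis (heis_chain p l))\<^esub>}"
proof -
  have p: "p > 1" using assms prime_gt_1_nat by blast
  define C where "C l = heis_lattice (int p ^ (2 * l)) (int p ^ (2 * l))" for l
  have core: "normal_core heis (heis_chain p l) = C l" for l
    by (simp add: C_def heis_chain_eq_lattice normal_core_heis_lattice le_imp_power_dvd)
  interpret inverse_system heis C
    by (rule inverse_system.intro)
      (simp_all add: group_heis C_def heis_lattice_normal heis_lattice_mono le_imp_power_dvd)
  have index: "card (rcosets\<^bsub>heis\<^esub> (C l)) = p ^ (6 * l)" for l
    using p by (simp add: C_def card_rcosets_heis_lattice nat_power_eq flip: power_mult)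
  have steinitz: "steinitz_exponent heis C q = (if q = p then \<infinity> else 0)"
    if "Factorial_Ring.prime q" for q
    by (rule steinitz_exponent_prime_power_indices[OF assms that index]) presburger
  have core_psubset: "C l \<subset> heis_chain p l" if "l > 0" for l
  proof -
    have "\<not> int p ^ (2 * l) dvd int p ^ l"
      using p that by (auto dest!: zdvd_imp_le simp: power_strict_increasing_iff)
    then show ?thesis
      by (simp add: C_def heis_chain_eq_lattice heis_lattice_psubset le_imp_power_dvd)
  qed
  have discriminant: "discriminant heis (heis_chain p) C = {\<one>\<^bsub>invlim heis C\<^esub>}"
  proof (rule discriminant_eq_one)
    show "\<exists>m\<ge>l. heis_chain p m \<subseteq> C l" for l
      by (intro exI[of _ "2 * l"])
        (simp add: C_def heis_chain_eq_lattice heis_lattice_mono le_imp_power_dvd)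
  qed (simp add: heis_chain_eq_lattice heis_lattice_def)
  have C_eq: "C l = {(int p ^ (2*l) * a, int p ^ (2*l) * b, int p ^ (2*l) * c) | a b c. True}" for l
    by (simp add: C_def heis_lattice_eq)
  show ?thesis
    unfolding core
    using p steinitz core_psubset discriminant
    by (intro conjI allI impI group_heis heis_phi_hom inj_heis_phi heis_chain_eq C_eq) auto
qed

end
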